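(* Let $p \ge 1$ be an integer, let $u_L \neq u_R$ be real numbers, let $c \neq 0$ be a real constant, and let $S:\mathbb{R}\to\mathbb{R}$ be a measurable function. For each grid spacing $h>0$ define the width $w_h = c\,h^{p/(p+1)}$ and the profile $$u_h(z) = \frac{u_L+u_R}{2} + \frac{u_R-u_L}{2}\, S\!\left(\frac{z}{w_h}\right), \qquad z \in \mathbb{R}.$$ For $\rho>0$ set $I(\rho) = \int_{-\infty}^{\infty} \left| S(\chi) - S(\rho\chi)\right|\,d\chi$. Let $h_1>0$ and $0<r<1$, and set $h_2 = r h_1$, $h_3 = r^2 h_1$. Assume $0 < I(r^{-p/(p+1)}) < \infty$. Then, with $\|\cdot\|$ the $L_1(\mathbb{R})$ norm, $$\frac{\|u_{h_1}-u_{h_2}\|}{\|u_{h_2}-u_{h_3}\|} = \left(\frac{h_1}{h_2}\right)^{p/(p+1)} = r^{-p/(p+1)},$$ and consequently $\sigma = p/(p+1)$ is the unique real $\sigma \neq 0$ satisfying $$\frac{\|u_{h_1}-u_{h_2}\|}{\|u_{h_2}-u_{h_3}\|} = \frac{|h_1^\sigma - h_2^\sigma|}{|h_2^\sigma - h_3^\sigma|}.$$ That is, the Richardson-extrapolation convergence-rate estimate $\mathcal{R}(u_{h_1},u_{rh_1},u_{r^2h_1})$ equals $p/(p+1)$, independently of the profile $S$.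
   Context: Setting: linear advection $u_t + a u_x = 0$ with jump initial data ($u=u_L$ for $x<0$, $u=u_R$ for $x\ge 0$), approximated by a (noncompressive, stable) $p$-th order scheme with grid spacing $h$. The scheme's modified equation, truncated and written in the moving frame $z = x - at$, is $U_\tau - \kappa_h U_{zzz\cdots}=0$ (a $(p+1)$-st $z$-derivative) with $\kappa_h = \tilde\kappa h^p$, whose solution at the final time $t_f$ is self-similar in $\xi_h = z/(\kappa_h t_f)^{1/(p+1)}$; this gives the form $u_h(z)=\frac{u_L+u_R}{2}+\frac{u_R-u_L}{2}S(\xi_h)$ with $w_h=(\tilde\kappa t_f)^{1/(p+1)} h^{p/(p+1)}$ (real $(p+1)$-th root), which is taken as the model of the numerical solution at resolution $h$. Richardson convergence-rate estimate: for three approximations $u_{h_1},u_{h_2},u_{h_3}$, $\mathcal{R}(u_{h_1},u_{h_2},u_{h_3})$ denotes the solution $\sigma$ of $\frac{\|u_{h_1}-u_{h_2}\|}{\|u_{h_2}-u_{h_3}\|} = \frac{|h_1^\sigma-h_2^\sigma|}{|h_2^\sigma-h_3^\sigma|}$, where $\|\cdot\|$ is the $L_1$ norm. *)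

theory Defs
  imports "HOL-Analysis.Analysis"
begin

text \<open>L1(R) norm of a real function, via the nonnegative Lebesgue integral
  (returned as an extended nonnegative real, so that infinite norms are not
  silently mapped to a finite value).\<close>
definition L1norm :: "(real \<Rightarrow> real) \<Rightarrow> ennreal" where
  "L1norm f = (\<integral>\<^sup>+ z. ennreal \<bar>f z\<bar> \<partial>lborel)"

definition width :: "real \<Rightarrow> nat \<Rightarrow> real \<Rightarrow> real" where
  "width c p h = c * h powr (real p / (real p + 1))"

definition profile ::
  "(real \<Rightarrow> real) \<Rightarrow> real \<Rightarrow> real \<Rightarrow> real \<Rightarrow> nat \<Rightarrow> real \<Rightarrow> real \<Rightarrow> real" where
  "profile S uL uR c p h z = (uL + uR) / 2 + (uR - uL) / 2 * S (z / width c p h)"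

definition Iint :: "(real \<Rightarrow> real) \<Rightarrow> real \<Rightarrow> ennreal" where
  "Iint S \<rho> = (\<integral>\<^sup>+ x. ennreal \<bar>S x - S (\<rho> * x)\<bar> \<partial>lborel)"

text \<open>Richardson convergence-rate estimate R(u1,u2,u3) for resolutions h1,h2,h3:
  the (nonzero) sigma solving the Richardson equation.\<close>
definition richardson_eq :: "real \<Rightarrow> real \<Rightarrow> real \<Rightarrow> real \<Rightarrow> real \<Rightarrow> bool" where
  "richardson_eq q h1 h2 h3 \<sigma> \<longleftrightarrow>
     q = \<bar>h1 powr \<sigma> - h2 powr \<sigma>\<bar> / \<bar>h2 powr \<sigma> - h3 powr \<sigma>\<bar>"

end

theory Submission imports Defs begin

text \<open>The profiles at all resolutions are rescalings of the single shape S, and the width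
  w_h is a power of h. A change of variables therefore gives
  \<open>\<parallel>u_h - u_{rh}\<parallel> = \<bar>u_R - u_L\<bar>/2 \<cdot> \<bar>w_h\<bar> \<cdot> I(r^{-p/(p+1)})\<close>, so the ratio of consecutive
  differences is \<open>w_{h_1}/w_{h_2} = r^{-p/(p+1)}\<close> whatever S is. On the other side, for
  geometric resolutions the Richardson quotient \<open>\<bar>h_1^\<sigma> - h_2^\<sigma>\<bar>/\<bar>h_2^\<sigma> - h_3^\<sigma>\<bar>\<close> equals
  \<open>r^{-\<sigma>}\<close>, which is injective in \<sigma>.\<close>

lemma L1norm_rescaled_difference:
  fixes S :: "real \<Rightarrow> real" and K w v :: real
  assumes [measurable]: "S \<in> borel_measurable borel" and w: "w \<noteq> 0" and "v \<noteq> 0"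
  shows "L1norm (\<lambda>z. K * (S (z / w) - S (z / v))) = ennreal (\<bar>K\<bar> * \<bar>w\<bar>) * Iint S (w / v)"
proof -
  have "L1norm (\<lambda>z. K * (S (z / w) - S (z / v)))
      = ennreal \<bar>w\<bar> * (\<integral>\<^sup>+x. ennreal \<bar>K * (S ((0 + w * x) / w) - S ((0 + w * x) / v))\<bar> \<partial>lborel)"
    unfolding L1norm_def by (rule nn_integral_real_affine[OF _ w]) measurable
  also have "(\<lambda>x. ennreal \<bar>K * (S ((0 + w * x) / w) - S ((0 + w * x) / v))\<bar>)
      = (\<lambda>x. ennreal \<bar>K\<bar> * ennreal \<bar>S x - S (w / v * x)\<bar>)"
    using w by (auto simp: abs_mult ennreal_mult[symmetric])
  also have "(\<integral>\<^sup>+x. ennreal \<bar>K\<bar> * ennreal \<bar>S x - S (w / v * x)\<bar> \<partial>lborel)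
      = ennreal \<bar>K\<bar> * Iint S (w / v)"
    unfolding Iint_def by (rule nn_integral_cmult) measurable
  finally show ?thesis
    by (simp add: ennreal_mult mult.assoc mult.left_commute)
qed

lemma profile_diff:
  "profile S uL uR c p h z - profile S uL uR c p h' z
     = (uR - uL) / 2 * (S (z / width c p h) - S (z / width c p h'))"
  unfolding profile_def by (simp add: algebra_simps)

lemma width_mult:
  assumes "r > 0" "h > 0"
  shows "width c p (r * h) = r powr (real p / (real p + 1)) * width c p h"
  using assms unfolding width_def by (simp add: powr_mult)

lemma width_nonzero:
  assumes "c \<noteq> 0" "h > 0"
  shows "width c p h \<noteq> 0"
  using assms unfolding width_def by simp

lemma L1norm_profile_step:
  fixes S :: "real \<Rightarrow> real"
  assumes "S \<in> borel_measurable borel" and "c \<noteq> 0" and "h > 0" and "r > 0"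
  shows "L1norm (\<lambda>z. profile S uL uR c p h z - profile S uL uR c p (r * h) z)
       = ennreal (\<bar>uR - uL\<bar> / 2 * \<bar>width c p h\<bar>) * Iint S (r powr (- real p / (real p + 1)))"
proof -
  let ?w = "width c p h"
  have w: "?w \<noteq> 0" using assms by (simp add: width_nonzero)
  have ratio: "?w / width c p (r * h) = r powr (- real p / (real p + 1))"
    using assms w by (simp add: width_mult[OF assms(4,3)] powr_minus divide_inverse)
  show ?thesis
    unfolding profile_diff
    using L1norm_rescaled_difference[OF assms(1) w, of "width c p (r * h)" "(uR - uL) / 2"]
      w assms(2-4) ratio
    by (simp add: width_nonzero)
qed

lemma L1norm_profile_step_pos_finite:
  fixes S :: "real \<Rightarrow> real"
  assumes "S \<in> borel_measurable borel" and "uL \<noteq> uR" and "c \<noteq> 0" and "h > 0" and "r > 0"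
    and "0 < Iint S (r powr (- real p / (real p + 1)))"
    and "Iint S (r powr (- real p / (real p + 1))) < \<infinity>"
  shows "0 < L1norm (\<lambda>z. profile S uL uR c p h z - profile S uL uR c p (r * h) z) \<and>
         L1norm (\<lambda>z. profile S uL uR c p h z - profile S uL uR c p (r * h) z) < \<infinity>"
  using assms(2,6,7) width_nonzero[OF assms(3,4)]
  unfolding L1norm_profile_step[OF assms(1,3-5)]
  by (simp add: ennreal_mult_less_top ennreal_zero_less_mult_iff)

lemma L1norm_profile_step_ratio:
  fixes S :: "real \<Rightarrow> real"
  assumes "S \<in> borel_measurable borel" and "uL \<noteq> uR" and "c \<noteq> 0" and "h > 0" and "r > 0"
    and "0 < Iint S (r powr (- real p / (real p + 1)))"
    and "Iint S (r powr (- real p / (real p + 1))) < \<infinity>"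
  shows "enn2real (L1norm (\<lambda>z. profile S uL uR c p h z - profile S uL uR c p (r * h) z)) /
         enn2real (L1norm (\<lambda>z. profile S uL uR c p (r * h) z - profile S uL uR c p (r * (r * h)) z))
       = r powr (- real p / (real p + 1))"
proof -
  have "r * h > 0" using assms by simp
  obtain i where i: "Iint S (r powr (- real p / (real p + 1))) = ennreal i" "i > 0"
    using assms(6,7) by (cases "Iint S (r powr (- real p / (real p + 1)))") auto
  have "enn2real (L1norm (\<lambda>z. profile S uL uR c p h z - profile S uL uR c p (r * h) z)) /
        enn2real (L1norm (\<lambda>z. profile S uL uR c p (r * h) z - profile S uL uR c p (r * (r * h)) z))
      = (\<bar>uR - uL\<bar> / 2 * \<bar>width c p h\<bar> * i) / (\<bar>uR - uL\<bar> / 2 * \<bar>width c p (r * h)\<bar> * i)"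
    unfolding L1norm_profile_step[OF assms(1,3-5)]
      L1norm_profile_step[OF assms(1,3) \<open>r * h > 0\<close> assms(5)] i
    using assms(2) i(2) width_nonzero[OF assms(3,4)] width_nonzero[OF assms(3) \<open>r * h > 0\<close>]
    by (simp add: ennreal_mult[symmetric])
  also have "\<dots> = \<bar>width c p h\<bar> / \<bar>width c p (r * h)\<bar>"
    using assms(2) i(2) by simp
  also have "\<dots> = r powr (- real p / (real p + 1))"
    unfolding width_mult[OF assms(5,4)]
    using width_nonzero[OF assms(3,4)] assms(5) by (simp add: abs_mult powr_minus divide_inverse)
  finally show ?thesis .
qed

lemma richardson_quotient_geometric:
  fixes h r \<sigma> :: real
  assumes "h > 0" "r > 0" "r \<noteq> 1" "\<sigma> \<noteq> 0"
  shows "\<bar>h powr \<sigma> - (r * h) powr \<sigma>\<bar> / \<bar>(r * h) powr \<sigma> - (r\<^sup>2 * h) powr \<sigma>\<bar> = r powr (- \<sigma>)"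
proof -
  let ?X = "h powr \<sigma> * (1 - r powr \<sigma>)"
  have "r powr \<sigma> \<noteq> r powr 0"
    using assms powr_inj[of r \<sigma> 0] by simp
  then have "r powr \<sigma> \<noteq> 1" using assms by simp
  then have X: "?X \<noteq> 0" using assms by simp
  have "h powr \<sigma> - (r * h) powr \<sigma> = ?X"
    using assms by (simp add: powr_mult algebra_simps)
  moreover have "(r * h) powr \<sigma> - (r\<^sup>2 * h) powr \<sigma> = r powr \<sigma> * ?X"
    using assms by (simp add: powr_mult algebra_simps power2_eq_square)
  moreover have "\<bar>?X\<bar> / \<bar>r powr \<sigma> * ?X\<bar> = inverse (r powr \<sigma>)"
    using X by (simp add: abs_mult inverse_eq_divide)
  ultimately show ?thesis
    by (simp only: powr_minus)
qed

lemma richardson_eq_geometric_iff: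
  assumes "h > 0" "r > 0" "r \<noteq> 1" "\<sigma> \<noteq> 0"
  shows "richardson_eq (r powr (- a)) h (r * h) (r\<^sup>2 * h) \<sigma> \<longleftrightarrow> \<sigma> = a"
  using assms by (auto simp: richardson_eq_def richardson_quotient_geometric powr_inj)

theorem mainTheorem1:
  fixes p :: nat and uL uR c h1 r :: real and S :: "real \<Rightarrow> real"
  assumes "p \<ge> 1" and "uL \<noteq> uR" and "c \<noteq> 0"
    and "S \<in> borel_measurable borel"
    and "h1 > 0" and "0 < r" and "r < 1"
    and "0 < Iint S (r powr (- real p / (real p + 1)))"
    and "Iint S (r powr (- real p / (real p + 1))) < \<infinity>"
  defines "u \<equiv> profile S uL uR c p"
    and "h2 \<equiv> r * h1" and "h3 \<equiv> r\<^sup>2 * h1"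
  shows "L1norm (\<lambda>z. u h1 z - u h2 z) < \<infinity> \<and>
         0 < L1norm (\<lambda>z. u h2 z - u h3 z) \<and>
         L1norm (\<lambda>z. u h2 z - u h3 z) < \<infinity> \<and>
         enn2real (L1norm (\<lambda>z. u h1 z - u h2 z)) / enn2real (L1norm (\<lambda>z. u h2 z - u h3 z))
           = (h1 / h2) powr (real p / (real p + 1)) \<and>
         (h1 / h2) powr (real p / (real p + 1)) = r powr (- real p / (real p + 1)) \<and>
         (\<forall>\<sigma>. \<sigma> \<noteq> 0 \<longrightarrow>
           (richardson_eq (enn2real (L1norm (\<lambda>z. u h1 z - u h2 z)) /
                           enn2real (L1norm (\<lambda>z. u h2 z - u h3 z))) h1 h2 h3 \<sigma>
            \<longleftrightarrow> \<sigma> = real p / (real p + 1)))"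
proof -
  define a where "a = real p / (real p + 1)"
  have minus_a: "- real p / (real p + 1) = - a" unfolding a_def by simp
  have "h2 > 0" and h3: "h3 = r * h2"
    using assms unfolding h2_def h3_def by (simp_all add: power2_eq_square)
  have norms: "0 < L1norm (\<lambda>z. u h z - u (r * h) z) \<and> L1norm (\<lambda>z. u h z - u (r * h) z) < \<infinity>"
    if "h > 0" for h
    unfolding u_def using L1norm_profile_step_pos_finite[OF assms(4,2,3) that assms(6,8,9)] .
  have ratio: "enn2real (L1norm (\<lambda>z. u h1 z - u h2 z)) /
      enn2real (L1norm (\<lambda>z. u h2 z - u h3 z)) = r powr (- a)"
    unfolding u_def h3 h2_def minus_a[symmetric]
    using L1norm_profile_step_ratio[OF assms(4,2,3,5,6,8,9)] .
  have h_ratio: "(h1 / h2) powr a = r powr (- a)"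
    unfolding h2_def using assms by (simp add: powr_minus powr_divide inverse_eq_divide)
  have "richardson_eq (r powr (- a)) h1 h2 h3 \<sigma> \<longleftrightarrow> \<sigma> = a" if "\<sigma> \<noteq> 0" for \<sigma>
    unfolding h2_def h3_def using richardson_eq_geometric_iff[OF assms(5,6)] assms(7) that by simp
  then show ?thesis
    unfolding a_def[symmetric] minus_a ratio h_ratio
    using norms[OF assms(5)] norms[OF \<open>h2 > 0\<close>] unfolding h2_def[symmetric] h3[symmetric] by simp
qed

end
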